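(* Let $F$ be a finite field of characteristic $3$. Let $k\ge 0$ be an integer, $m=3k+1$, and $t$ an integer with $t^3\equiv 1\pmod m$ and $\gcd(m,t-1)=1$. Let $G=T_{3m}=\langle x,y\mid x^m=y^3=1,\ y^{-1}xy=x^t\rangle$ (of order $3m$) and let $FG$ be its group algebra over $F$. Let $s\in FG$ be the sum of all elements of $G$ whose order is a power of $3$ (including the identity). Then $$\{\alpha\in FG \mid \alpha s=s\alpha=0\}=\{a^-\hat{x}y^{-1}+a\hat{x}+a^+\hat{x}y \mid a^-,a,a^+\in F,\ a^-+a+a^+=0\}.$$
   Context: $\hat{x}=\sum_{i=0}^{m-1}x^i\in FG$, and for $g\in G$, $\hat{x}g=\sum_{i=0}^{m-1}x^ig$. *)

theory Defs
  imports "HOL-Algebra.Multiplicative_Group" "HOL-Number_Theory.Cong"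
begin

text \<open>The group T_{3m} = < x, y | x^m = y^3 = 1, y^-1 x y = x^t >, realised concretely:
  the pair (i, j) with i < m, j < 3 stands for x^i y^j.  From y^-1 x y = x^t and t^3 = 1
  one gets y^j x^k = x^(k t^(2j)) y^j, whence the multiplication below.\<close>

definition Tgrp :: "nat \<Rightarrow> int \<Rightarrow> (nat \<times> nat) monoid" where
  "Tgrp m t = \<lparr> carrier = {(i, j). i < m \<and> j < 3},
     monoid.mult = (\<lambda>(i, j) (k, l). (nat ((int i + int k * t ^ (2 * j)) mod int m), (j + l) mod 3)),
     monoid.one = (0, 0) \<rparr>"

definition xgen :: "nat \<Rightarrow> nat \<times> nat" where
  "xgen m = (1 mod m, 0)"

definition ygen :: "nat \<times> nat" where
  "ygen = (0, 1)"

definition in_FG :: "nat \<Rightarrow> int \<Rightarrow> (nat \<times> nat \<Rightarrow> 'a::field) \<Rightarrow> bool" where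
  "in_FG m t \<alpha> \<longleftrightarrow> (\<forall>g. g \<notin> carrier (Tgrp m t) \<longrightarrow> \<alpha> g = 0)"

definition ga_mult :: "nat \<Rightarrow> int \<Rightarrow> (nat \<times> nat \<Rightarrow> 'a::field) \<Rightarrow> (nat \<times> nat \<Rightarrow> 'a) \<Rightarrow> (nat \<times> nat \<Rightarrow> 'a)" where
  "ga_mult m t \<alpha> \<beta> = (\<lambda>g. \<Sum>h\<in>carrier (Tgrp m t). \<Sum>k\<in>carrier (Tgrp m t).
       if h \<otimes>\<^bsub>Tgrp m t\<^esub> k = g then \<alpha> h * \<beta> k else 0)"

definition ga_basis :: "nat \<times> nat \<Rightarrow> (nat \<times> nat \<Rightarrow> 'a::field)" where
  "ga_basis g = (\<lambda>h. if h = g then 1 else 0)"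

definition ga_add :: "(nat \<times> nat \<Rightarrow> 'a::field) \<Rightarrow> (nat \<times> nat \<Rightarrow> 'a) \<Rightarrow> (nat \<times> nat \<Rightarrow> 'a)" where
  "ga_add \<alpha> \<beta> = (\<lambda>g. \<alpha> g + \<beta> g)"

definition ga_smult :: "'a::field \<Rightarrow> (nat \<times> nat \<Rightarrow> 'a) \<Rightarrow> (nat \<times> nat \<Rightarrow> 'a)" where
  "ga_smult a \<alpha> = (\<lambda>g. a * \<alpha> g)"

definition xhat :: "nat \<Rightarrow> int \<Rightarrow> (nat \<times> nat \<Rightarrow> 'a::field)" where
  "xhat m t = (\<lambda>g. \<Sum>i<m. ga_basis (xgen m [^]\<^bsub>Tgrp m t\<^esub> i) g)"

definition s3 :: "nat \<Rightarrow> int \<Rightarrow> (nat \<times> nat \<Rightarrow> 'a::field)" where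
  "s3 m t = (\<lambda>g. if g \<in> carrier (Tgrp m t) \<and> (\<exists>e. group.ord (Tgrp m t) g = 3 ^ e) then 1 else 0)"

end

(* Elements x^i y^j with j <> 0 have order 3, because m divides 1 + t + t^2 (from t^3 = 1 and
   gcd (m, t - 1) = 1); the nontrivial powers of x have order dividing m, which is prime to 3.
   So s = 1 + (sum of all x^i y^j with j <> 0), and both (alpha s)(g) and (s alpha)(g) equal
   alpha(g) + eps(alpha) - R_j(alpha), where g lies in the coset <x> y^j, R_j(alpha) is the sum of the
   coefficients of alpha on that coset and eps(alpha) = R_0 + R_1 + R_2.  If these vanish, alpha is
   constant, say a_j, on each coset; then R_j = m a_j = a_j because m = 1 in characteristic 3, hence
   eps(alpha) = 0, i.e. a_0 + a_1 + a_2 = 0.  The converse is the same computation read backwards. *)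

theory Submission
  imports Defs
begin

lemma carrier_Tgrp: "carrier (Tgrp m t) = {(i, j). i < m \<and> j < 3}"
  by (simp add: Tgrp_def)

lemma one_Tgrp: "\<one>\<^bsub>Tgrp m t\<^esub> = (0, 0)"
  by (simp add: Tgrp_def)

lemma mult_Tgrp:
  "(i, j) \<otimes>\<^bsub>Tgrp m t\<^esub> (k, l) = (nat ((int i + int k * t ^ (2 * j)) mod int m), (j + l) mod 3)"
  by (simp add: Tgrp_def)

lemma carrier_Tgrp_eq_product: "carrier (Tgrp m t) = {..<m} \<times> {..<3}"
  by (auto simp: carrier_Tgrp)

lemma finite_carrier_Tgrp: "finite (carrier (Tgrp m t))"
  by (simp add: carrier_Tgrp_eq_product)

lemma snd_mult_Tgrp: "snd (g \<otimes>\<^bsub>Tgrp m t\<^esub> h) = (snd g + snd h) mod 3"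
  by (cases g; cases h) (simp add: mult_Tgrp)

lemma int_fst_mult_Tgrp:
  assumes "m > 0"
  shows "int (fst ((i, j) \<otimes>\<^bsub>Tgrp m t\<^esub> (k, l))) = (int i + int k * t ^ (2 * j)) mod int m"
  using assms by (simp add: mult_Tgrp)

lemma cong_power_mod_3:
  fixes t :: int
  assumes "[t ^ 3 = 1] (mod n)"
  shows "[t ^ k = t ^ (k mod 3)] (mod n)"
proof -
  have "[(t ^ 3) ^ (k div 3) * t ^ (k mod 3) = 1 ^ (k div 3) * t ^ (k mod 3)] (mod n)"
    using assms by (intro cong_mult cong_pow) auto
  then show ?thesis
    by (simp flip: power_mult power_add)
qed

lemma mult_Tgrp_closed:
  assumes "m > 0" and "g \<in> carrier (Tgrp m t)" and "h \<in> carrier (Tgrp m t)"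
  shows "g \<otimes>\<^bsub>Tgrp m t\<^esub> h \<in> carrier (Tgrp m t)"
  using assms by (cases g; cases h) (auto simp: carrier_Tgrp mult_Tgrp nat_less_iff)

lemma mult_Tgrp_assoc:
  fixes t :: int
  assumes m: "m > 0" and t3: "[t ^ 3 = 1] (mod int m)"
  shows "(x \<otimes>\<^bsub>Tgrp m t\<^esub> y) \<otimes>\<^bsub>Tgrp m t\<^esub> z
    = x \<otimes>\<^bsub>Tgrp m t\<^esub> (y \<otimes>\<^bsub>Tgrp m t\<^esub> z)"
proof -
  obtain i j k l p q where xyz: "x = (i, j)" "y = (k, l)" "z = (p, q)"
    by (cases x; cases y; cases z)
  define a b c where "a = t ^ (2 * j)" and "b = t ^ (2 * ((j + l) mod 3))" and "c = t ^ (2 * l)"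
  obtain i' k' where xy: "x \<otimes>\<^bsub>Tgrp m t\<^esub> y = (i', (j + l) mod 3)"
    and yz: "y \<otimes>\<^bsub>Tgrp m t\<^esub> z = (k', (l + q) mod 3)"
    by (simp add: xyz mult_Tgrp)
  have i': "[int i' = int i + int k * a] (mod int m)"
    using int_fst_mult_Tgrp [OF m, where i = i and j = j and k = k and l = l and t = t]
    by (simp add: xy [unfolded xyz] a_def cong_def)
  have k': "[int k' = int k + int p * c] (mod int m)"
    using int_fst_mult_Tgrp [OF m, where i = k and j = l and k = p and l = q and t = t]
    by (simp add: yz [unfolded xyz] c_def cong_def)
  have "2 * ((j + l) mod 3) mod 3 = (2 * j + 2 * l) mod 3"
    by (metis mod_mult_right_eq distrib_left)
  then have "[b = t ^ (2 * j + 2 * l)] (mod int m)"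
    using cong_power_mod_3 [OF t3, of "2 * ((j + l) mod 3)"] cong_power_mod_3 [OF t3, of "2 * j + 2 * l"]
    unfolding b_def by (metis cong_sym cong_trans)
  then have b: "[b = a * c] (mod int m)"
    by (simp add: a_def c_def power_add)
  have "[int i' + int p * b = int i + int k' * a] (mod int m)"
  proof -
    have "[int i' + int p * b = (int i + int k * a) + int p * (a * c)] (mod int m)"
      using i' b by (intro cong_add cong_mult cong_refl)
    moreover have "[int i + (int k + int p * c) * a = int i + int k' * a] (mod int m)"
      using k' by (intro cong_add cong_mult cong_refl) (rule cong_sym)
    ultimately show ?thesis
      by (simp add: algebra_simps cong_trans)
  qed
  then show ?thesis
    unfolding xy yz unfolding xyz
    by (simp add: mult_Tgrp a_def b_def cong_def mod_add_left_eq mod_add_right_eq add.assoc)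
qed

lemma group_Tgrp:
  fixes t :: int
  assumes m: "m > 0" and t3: "[t ^ 3 = 1] (mod int m)"
  shows "group (Tgrp m t)"
proof (rule groupI)
  fix x assume "x \<in> carrier (Tgrp m t)"
  then obtain i j where x: "x = (i, j)" "i < m" "j < 3"
    by (auto simp: carrier_Tgrp)
  define l where "l = (3 - j) mod 3"
  define x' where "x' = (nat ((- int i * t ^ (2 * l)) mod int m), l)"
  have "x' \<otimes>\<^bsub>Tgrp m t\<^esub> x = \<one>\<^bsub>Tgrp m t\<^esub>"
    using m \<open>j < 3\<close> by (simp add: x(1) x'_def l_def mult_Tgrp one_Tgrp mod_add_left_eq)
  moreover have "x' \<in> carrier (Tgrp m t)"
    using m by (simp add: x'_def l_def carrier_Tgrp nat_less_iff)
  ultimately show "\<exists>x'\<in>carrier (Tgrp m t). x' \<otimes>\<^bsub>Tgrp m t\<^esub> x = \<one>\<^bsub>Tgrp m t\<^esub>"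
    by blast
qed (use m in \<open>auto simp: mult_Tgrp_closed mult_Tgrp_assoc [OF m t3] carrier_Tgrp one_Tgrp mult_Tgrp
    nat_less_iff\<close>)

lemma ga_mult_eq_sum_right:
  assumes G: "group (Tgrp m t)" and g: "g \<in> carrier (Tgrp m t)"
  shows "ga_mult m t \<alpha> \<beta> g
    = (\<Sum>h\<in>carrier (Tgrp m t). \<alpha> h * \<beta> (inv\<^bsub>Tgrp m t\<^esub> h \<otimes>\<^bsub>Tgrp m t\<^esub> g))"
proof -
  interpret group "Tgrp m t" by (fact G)
  have "ga_mult m t \<alpha> \<beta> g = (\<Sum>h\<in>carrier (Tgrp m t). \<Sum>k\<in>carrier (Tgrp m t).
      if k = inv\<^bsub>Tgrp m t\<^esub> h \<otimes>\<^bsub>Tgrp m t\<^esub> g then \<alpha> h * \<beta> k else 0)"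
    unfolding ga_mult_def by (intro sum.cong refl) (use g inv_solve_left in auto)
  also have "\<dots> = (\<Sum>h\<in>carrier (Tgrp m t). \<alpha> h * \<beta> (inv\<^bsub>Tgrp m t\<^esub> h \<otimes>\<^bsub>Tgrp m t\<^esub> g))"
    using g by (intro sum.cong refl) (simp add: finite_carrier_Tgrp sum.delta')
  finally show ?thesis .
qed

lemma ga_mult_eq_sum_left:
  assumes G: "group (Tgrp m t)" and g: "g \<in> carrier (Tgrp m t)"
  shows "ga_mult m t \<alpha> \<beta> g
    = (\<Sum>k\<in>carrier (Tgrp m t). \<alpha> (g \<otimes>\<^bsub>Tgrp m t\<^esub> inv\<^bsub>Tgrp m t\<^esub> k) * \<beta> k)"
proof -
  interpret group "Tgrp m t" by (fact G)
  have "ga_mult m t \<alpha> \<beta> g = (\<Sum>k\<in>carrier (Tgrp m t). \<Sum>h\<in>carrier (Tgrp m t).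
      if h \<otimes>\<^bsub>Tgrp m t\<^esub> k = g then \<alpha> h * \<beta> k else 0)"
    unfolding ga_mult_def by (rule sum.swap)
  also have "\<dots> = (\<Sum>k\<in>carrier (Tgrp m t). \<Sum>h\<in>carrier (Tgrp m t).
      if h = g \<otimes>\<^bsub>Tgrp m t\<^esub> inv\<^bsub>Tgrp m t\<^esub> k then \<alpha> h * \<beta> k else 0)"
    by (intro sum.cong refl) (use g inv_solve_right in auto)
  also have "\<dots> = (\<Sum>k\<in>carrier (Tgrp m t). \<alpha> (g \<otimes>\<^bsub>Tgrp m t\<^esub> inv\<^bsub>Tgrp m t\<^esub> k) * \<beta> k)"
    using g by (intro sum.cong refl) (simp add: finite_carrier_Tgrp sum.delta')
  finally show ?thesis .
qed

lemma ga_mult_basis_right: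
  assumes G: "group (Tgrp m t)" and g: "g \<in> carrier (Tgrp m t)" and h: "h \<in> carrier (Tgrp m t)"
  shows "ga_mult m t \<alpha> (ga_basis h) g = \<alpha> (g \<otimes>\<^bsub>Tgrp m t\<^esub> inv\<^bsub>Tgrp m t\<^esub> h)"
proof -
  have "ga_mult m t \<alpha> (ga_basis h) g = (\<Sum>k\<in>carrier (Tgrp m t).
      if k = h then \<alpha> (g \<otimes>\<^bsub>Tgrp m t\<^esub> inv\<^bsub>Tgrp m t\<^esub> h) else 0)"
    unfolding ga_mult_eq_sum_left[OF G g] by (intro sum.cong refl) (simp add: ga_basis_def)
  then show ?thesis
    using h by (simp add: finite_carrier_Tgrp sum.delta')
qed

lemma ga_mult_outside_carrier:
  assumes "m > 0" and "g \<notin> carrier (Tgrp m t)"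
  shows "ga_mult m t \<alpha> \<beta> g = 0"
  unfolding ga_mult_def by (intro sum.neutral ballI) (use mult_Tgrp_closed[OF assms(1)] assms(2) in auto)

lemma pow_Tgrp_x: "i < m \<Longrightarrow> (i, 0) [^]\<^bsub>Tgrp m t\<^esub> n = (n * i mod m, 0)"
proof (induction n)
  case 0
  then show ?case by (simp add: one_Tgrp)
next
  case (Suc n)
  have "(int (n * i mod m) + int i) mod int m = int ((n * i + i) mod m)"
    by (simp add: of_nat_mod mod_add_left_eq)
  with Suc show ?case
    by (simp add: mult_Tgrp add.commute)
qed

lemma xhat_eq:
  assumes "m > 0"
  shows "xhat m t = (\<lambda>g. if g \<in> carrier (Tgrp m t) \<and> snd g = 0 then 1 else 0)"
proof (intro ext, clarify)
  fix i j
  have "xgen m [^]\<^bsub>Tgrp m t\<^esub> n = (n mod m, 0)" for n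
    using assms by (simp add: xgen_def pow_Tgrp_x mod_mult_right_eq)
  then have "xhat m t (i, j) = (\<Sum>n<m. if n = i then (if j = 0 then 1 else 0) else 0)"
    unfolding xhat_def ga_basis_def by (intro sum.cong refl) auto
  then show "xhat m t (i, j) = (if (i, j) \<in> carrier (Tgrp m t) \<and> snd (i, j) = 0 then 1 else 0)"
    by (simp add: carrier_Tgrp split: if_splits)
qed

lemma cong_cube_root_of_unity_sum:
  fixes t n :: int
  assumes "[t ^ 3 = 1] (mod n)" and "coprime n (t - 1)"
  shows "[t ^ 2 + t + 1 = 0] (mod n)"
proof -
  have "n dvd (t - 1) * (t ^ 2 + t + 1)"
    using assms(1) by (simp add: cong_iff_dvd_diff algebra_simps power2_eq_square power3_eq_cube)
  then show ?thesis
    using assms(2) by (simp add: cong_0_iff coprime_dvd_mult_right_iff)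
qed

lemma sum_carrier_Tgrp:
  "(\<Sum>g\<in>carrier (Tgrp m t). f g) = (\<Sum>i<m. f (i, 0)) + (\<Sum>i<m. f (i, 1)) + (\<Sum>i<m. f (i, 2))"
proof -
  have "(\<Sum>g\<in>carrier (Tgrp m t). f g) = (\<Sum>i<m. \<Sum>j<3. f (i, j))"
    by (simp add: carrier_Tgrp_eq_product sum.cartesian_product)
  also have "\<dots> = (\<Sum>i<m. f (i, 0) + f (i, 1) + f (i, 2))"
    by (simp add: insert_commute lessThan_nat_numeral add_ac)
  finally show ?thesis
    by (simp add: sum.distrib)
qed

lemma sum_row_Tgrp:
  assumes "j < 3"
  shows "(\<Sum>h\<in>carrier (Tgrp m t). if snd h = j then f h else 0) = (\<Sum>i<m. f (i, j))"
proof -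
  from assms have "j = 0 \<or> j = 1 \<or> j = 2"
    by auto
  then show ?thesis
    by (auto simp: sum_carrier_Tgrp)
qed

lemma sum_same_or_other_row_Tgrp:
  fixes \<alpha> :: "nat \<times> nat \<Rightarrow> 'a::comm_ring_1"
  assumes g: "g \<in> carrier (Tgrp m t)"
  shows "(\<Sum>h\<in>carrier (Tgrp m t). \<alpha> h * (if h = g \<or> snd h \<noteq> snd g then 1 else 0))
    = \<alpha> g + (\<Sum>h\<in>carrier (Tgrp m t). \<alpha> h) - (\<Sum>i<m. \<alpha> (i, snd g))"
proof -
  have "(\<Sum>h\<in>carrier (Tgrp m t). \<alpha> h * (if h = g \<or> snd h \<noteq> snd g then 1 else 0))
      = (\<Sum>h\<in>carrier (Tgrp m t). \<alpha> h + (if h = g then \<alpha> h else 0) - (if snd h = snd g then \<alpha> h else 0))"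
    by (intro sum.cong refl) auto
  also have "\<dots> = \<alpha> g + (\<Sum>h\<in>carrier (Tgrp m t). \<alpha> h) - (\<Sum>i<m. \<alpha> (i, snd g))"
    using g sum_row_Tgrp [where j = "snd g" and f = \<alpha> and m = m and t = t]
    by (simp add: sum.distrib sum_subtractf sum.delta' finite_carrier_Tgrp)
      (auto simp: carrier_Tgrp)
  finally show ?thesis .
qed

(* a0 xhat + a1 xhat y + a2 xhat y^2 *)
definition xhat_comb :: "nat \<Rightarrow> 'a \<Rightarrow> 'a \<Rightarrow> 'a \<Rightarrow> nat \<times> nat \<Rightarrow> 'a::zero" where
  "xhat_comb m a0 a1 a2 = (\<lambda>(i, j). if i < m then
     (if j = 0 then a0 else if j = 1 then a1 else if j = 2 then a2 else 0) else 0)"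

lemma in_FG_xhat_comb: "in_FG m t (xhat_comb m a0 a1 a2)"
  by (auto simp: in_FG_def xhat_comb_def carrier_Tgrp)

lemma in_FG_zero_sum_xhat_comb_eq:
  "{\<alpha>. in_FG m t \<alpha> \<and> (\<exists>a0 a1 a2. a0 + a1 + a2 = 0 \<and> \<alpha> = xhat_comb m a0 a1 a2)}
    = {xhat_comb m a ap am | am a ap. am + (a :: 'a::field) + ap = 0}"
proof (intro Set.set_eqI iffI)
  fix \<alpha> :: "nat \<times> nat \<Rightarrow> 'a"
  assume "\<alpha> \<in> {\<alpha>. in_FG m t \<alpha> \<and> (\<exists>a0 a1 a2. a0 + a1 + a2 = 0 \<and> \<alpha> = xhat_comb m a0 a1 a2)}"
  then obtain a0 a1 a2 where "a0 + a1 + a2 = 0" and "\<alpha> = xhat_comb m a0 a1 a2"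
    by blast
  moreover have "a2 + a0 + a1 = 0"
    using \<open>a0 + a1 + a2 = 0\<close> by (simp add: add_ac)
  ultimately show "\<alpha> \<in> {xhat_comb m a ap am | am a ap. am + a + ap = 0}"
    by blast
next
  fix \<alpha> :: "nat \<times> nat \<Rightarrow> 'a"
  assume "\<alpha> \<in> {xhat_comb m a ap am | am a ap. am + a + ap = 0}"
  then obtain am a ap where "am + a + ap = 0" and "\<alpha> = xhat_comb m a ap am"
    by blast
  moreover have "a + ap + am = 0"
    using \<open>am + a + ap = 0\<close> by (simp add: add_ac)
  ultimately show "\<alpha> \<in> {\<alpha>. in_FG m t \<alpha> \<and> (\<exists>a0 a1 a2. a0 + a1 + a2 = 0 \<and> \<alpha> = xhat_comb m a0 a1 a2)}"
    using in_FG_xhat_comb by blast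
qed

lemma xhat_comb_apply:
  "i < m \<Longrightarrow> xhat_comb m a0 a1 a2 (i, j) = (if j = 0 then a0 else if j = 1 then a1 else if j = 2 then a2 else 0)"
  by (simp add: xhat_comb_def)

lemma annihilator_condition_iff_xhat_comb:
  fixes \<alpha> :: "nat \<times> nat \<Rightarrow> 'a::field"
  assumes m: "of_nat m = (1::'a)" and \<alpha>: "in_FG m t \<alpha>"
  shows "(\<forall>g\<in>carrier (Tgrp m t). \<alpha> g + (\<Sum>h\<in>carrier (Tgrp m t). \<alpha> h) - (\<Sum>i<m. \<alpha> (i, snd g)) = 0)
    \<longleftrightarrow> (\<exists>a0 a1 a2. a0 + a1 + a2 = 0 \<and> \<alpha> = xhat_comb m a0 a1 a2)"
    (is "(\<forall>g\<in>_. \<alpha> g + ?T - ?R (snd g) = 0) \<longleftrightarrow> _")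
proof
  assume H: "\<forall>g\<in>carrier (Tgrp m t). \<alpha> g + ?T - ?R (snd g) = 0"
  define c where "c j = ?R j - ?T" for j
  have row: "\<alpha> (i, j) = c j" if "i < m" and "j < 3" for i j
    using H that by (auto simp: carrier_Tgrp c_def algebra_simps)
  have R: "?R j = c j" if "j < 3" for j
    using m row that by simp
  then have "?T = 0"
    using R [of 0] by (simp add: c_def)
  moreover have "?T = c 0 + c 1 + c 2"
    by (simp add: sum_carrier_Tgrp R)
  moreover have "\<alpha> = xhat_comb m (c 0) (c 1) (c 2)"
  proof (intro ext, clarify)
    fix i j
    show "\<alpha> (i, j) = xhat_comb m (c 0) (c 1) (c 2) (i, j)"
    proof (cases "i < m \<and> j < 3")
      case True
      then have "j = 0 \<or> j = 1 \<or> j = 2"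
        by auto
      with True show ?thesis
        by (auto simp: row xhat_comb_def)
    next
      case False
      then show ?thesis
        using \<alpha> by (auto simp: in_FG_def carrier_Tgrp xhat_comb_def)
    qed
  qed
  ultimately show "\<exists>a0 a1 a2. a0 + a1 + a2 = 0 \<and> \<alpha> = xhat_comb m a0 a1 a2"
    by auto
next
  assume "\<exists>a0 a1 a2. a0 + a1 + a2 = 0 \<and> \<alpha> = xhat_comb m a0 a1 a2"
  then obtain a0 a1 a2 where sum: "a0 + a1 + a2 = 0" and \<alpha>: "\<alpha> = xhat_comb m a0 a1 a2"
    by blast
  have "?T = 0"
    using sum m by (simp add: sum_carrier_Tgrp \<alpha> xhat_comb_apply)
  show "\<forall>g\<in>carrier (Tgrp m t). \<alpha> g + ?T - ?R (snd g) = 0"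
  proof
    fix g assume "g \<in> carrier (Tgrp m t)"
    then obtain i j where g: "g = (i, j)" "i < m" "j < 3"
      by (auto simp: carrier_Tgrp)
    then show "\<alpha> g + ?T - ?R (snd g) = 0"
      using \<open>?T = 0\<close> m by (auto simp: \<alpha> xhat_comb_apply)
  qed
qed

locale T3m =
  fixes m :: nat and t :: int
  assumes m_pos: "m > 0"
    and t_cube: "[t ^ 3 = 1] (mod int m)"
    and coprime_t_minus_1: "coprime (int m) (t - 1)"
    and not_3_dvd_m: "\<not> 3 dvd m"
begin

sublocale G: group "Tgrp m t"
  by (rule group_Tgrp[OF m_pos t_cube])

lemma cube_eq_one:
  assumes "g \<in> carrier (Tgrp m t)" and "snd g \<noteq> 0"
  shows "g [^]\<^bsub>Tgrp m t\<^esub> (3::nat) = \<one>\<^bsub>Tgrp m t\<^esub>"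
proof -
  obtain i j where g: "g = (i, j)" and "j < 3"
    using assms(1) by (auto simp: carrier_Tgrp)
  with assms(2) have j: "j = 1 \<or> j = 2"
    by auto
  have "[t ^ 4 = t] (mod int m)"
    using cong_power_mod_3[OF t_cube, of 4] by simp
  then have "[int i + int i * t ^ 2 + int i * t ^ 4 = int i + int i * t ^ 2 + int i * t] (mod int m)"
    by (intro cong_add cong_mult cong_refl)
  also have "int i + int i * t ^ 2 + int i * t = int i * (t ^ 2 + t + 1)"
    by (simp add: algebra_simps)
  also have "[\<dots> = 0] (mod int m)"
    using cong_cube_root_of_unity_sum[OF t_cube coprime_t_minus_1] cong_scalar_left by fastforce
  finally have "(int i + int i * t ^ 2 + int i * t ^ 4) mod int m = 0"
    by (simp add: cong_def)
  moreover from this have "(int i + int i * t ^ 4 + int i * t ^ 2) mod int m = 0"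
    by (simp add: add_ac)
  moreover have "g [^]\<^bsub>Tgrp m t\<^esub> (3::nat) = g \<otimes>\<^bsub>Tgrp m t\<^esub> g \<otimes>\<^bsub>Tgrp m t\<^esub> g"
    using assms(1) by (simp add: numeral_3_eq_3)
  ultimately show ?thesis
    using j m_pos by (auto simp: g mult_Tgrp one_Tgrp mod_add_left_eq)
qed

lemma ord_eq_power_of_3_iff:
  assumes g: "g \<in> carrier (Tgrp m t)"
  shows "(\<exists>e. G.ord g = 3 ^ e) \<longleftrightarrow> g = \<one>\<^bsub>Tgrp m t\<^esub> \<or> snd g \<noteq> 0"
proof (cases "snd g = 0")
  case True
  then obtain i where i: "g = (i, 0)" "i < m"
    using g by (cases g) (auto simp: carrier_Tgrp)
  have "G.ord g dvd m"
    using g by (simp add: G.pow_eq_id [symmetric] i pow_Tgrp_x one_Tgrp)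
  then have "G.ord g = 3 ^ e \<Longrightarrow> e = 0" for e
    using not_3_dvd_m by (metis dvd_power dvd_trans not_gr0)
  then show ?thesis
    using True g G.ord_eq_1 by (metis power_0)
next
  case False
  then have "G.ord g dvd 3 ^ 1"
    using g cube_eq_one by (simp add: G.pow_eq_id [symmetric])
  moreover have "prime (3::nat)"
    by simp
  ultimately show ?thesis
    using False divides_primepow_nat by blast
qed

lemma s3_eq:
  "s3 m t = (\<lambda>g. if g \<in> carrier (Tgrp m t) \<and> (g = \<one>\<^bsub>Tgrp m t\<^esub> \<or> snd g \<noteq> 0) then 1 else 0)"
  by (intro ext) (simp add: s3_def ord_eq_power_of_3_iff cong: conj_cong)

lemma snd_inv_Tgrp:
  assumes "h \<in> carrier (Tgrp m t)"
  shows "(snd (inv\<^bsub>Tgrp m t\<^esub> h) + snd h) mod 3 = 0"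
  using snd_mult_Tgrp [where g = "inv\<^bsub>Tgrp m t\<^esub> h" and h = h and m = m and t = t] assms
  by (simp add: one_Tgrp)

lemma snd_inv_mult_eq_0_iff:
  assumes g: "g \<in> carrier (Tgrp m t)" and h: "h \<in> carrier (Tgrp m t)"
  shows "snd (inv\<^bsub>Tgrp m t\<^esub> h \<otimes>\<^bsub>Tgrp m t\<^esub> g) = 0 \<longleftrightarrow> snd h = snd g"
  using snd_inv_Tgrp [OF h] G.inv_closed [OF h] g h
  by (auto simp: snd_mult_Tgrp carrier_Tgrp) presburger+

lemma snd_mult_inv_eq_0_iff:
  assumes g: "g \<in> carrier (Tgrp m t)" and h: "h \<in> carrier (Tgrp m t)"
  shows "snd (g \<otimes>\<^bsub>Tgrp m t\<^esub> inv\<^bsub>Tgrp m t\<^esub> h) = 0 \<longleftrightarrow> snd h = snd g"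
  using snd_inv_Tgrp [OF h] G.inv_closed [OF h] g h
  by (auto simp: snd_mult_Tgrp carrier_Tgrp) presburger+

lemma s3_inv_mult:
  assumes g: "g \<in> carrier (Tgrp m t)" and h: "h \<in> carrier (Tgrp m t)"
  shows "s3 m t (inv\<^bsub>Tgrp m t\<^esub> h \<otimes>\<^bsub>Tgrp m t\<^esub> g) = (if h = g \<or> snd h \<noteq> snd g then 1 else 0)"
proof -
  have "inv\<^bsub>Tgrp m t\<^esub> h \<otimes>\<^bsub>Tgrp m t\<^esub> g = \<one>\<^bsub>Tgrp m t\<^esub> \<longleftrightarrow> h = g"
    using G.inv_solve_left [of "\<one>\<^bsub>Tgrp m t\<^esub>" h g] g h by auto
  then show ?thesis
    using g h snd_inv_mult_eq_0_iff [OF g h] by (auto simp: s3_eq)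
qed

lemma s3_mult_inv:
  assumes g: "g \<in> carrier (Tgrp m t)" and h: "h \<in> carrier (Tgrp m t)"
  shows "s3 m t (g \<otimes>\<^bsub>Tgrp m t\<^esub> inv\<^bsub>Tgrp m t\<^esub> h) = (if h = g \<or> snd h \<noteq> snd g then 1 else 0)"
proof -
  have "g \<otimes>\<^bsub>Tgrp m t\<^esub> inv\<^bsub>Tgrp m t\<^esub> h = \<one>\<^bsub>Tgrp m t\<^esub> \<longleftrightarrow> h = g"
    using G.inv_solve_right [of "\<one>\<^bsub>Tgrp m t\<^esub>" g h] g h by auto
  then show ?thesis
    using g h snd_mult_inv_eq_0_iff [OF g h] by (auto simp: s3_eq)
qed

lemma ga_mult_s3:
  assumes g: "g \<in> carrier (Tgrp m t)"
  shows "ga_mult m t \<alpha> (s3 m t) g = \<alpha> g + (\<Sum>h\<in>carrier (Tgrp m t). \<alpha> h) - (\<Sum>i<m. \<alpha> (i, snd g))"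
    and "ga_mult m t (s3 m t) \<alpha> g = \<alpha> g + (\<Sum>h\<in>carrier (Tgrp m t). \<alpha> h) - (\<Sum>i<m. \<alpha> (i, snd g))"
proof -
  have "ga_mult m t \<alpha> (s3 m t) g
      = (\<Sum>h\<in>carrier (Tgrp m t). \<alpha> h * (if h = g \<or> snd h \<noteq> snd g then 1 else 0))"
    using g by (simp add: ga_mult_eq_sum_right G.is_group s3_inv_mult)
  then show "ga_mult m t \<alpha> (s3 m t) g = \<alpha> g + (\<Sum>h\<in>carrier (Tgrp m t). \<alpha> h) - (\<Sum>i<m. \<alpha> (i, snd g))"
    using g by (simp add: sum_same_or_other_row_Tgrp)
  have "ga_mult m t (s3 m t) \<alpha> g
      = (\<Sum>h\<in>carrier (Tgrp m t). \<alpha> h * (if h = g \<or> snd h \<noteq> snd g then 1 else 0))"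
    using g by (simp add: ga_mult_eq_sum_left G.is_group s3_mult_inv mult.commute)
  then show "ga_mult m t (s3 m t) \<alpha> g = \<alpha> g + (\<Sum>h\<in>carrier (Tgrp m t). \<alpha> h) - (\<Sum>i<m. \<alpha> (i, snd g))"
    using g by (simp add: sum_same_or_other_row_Tgrp)
qed

lemma ga_mult_s3_eq_0_iff:
  "ga_mult m t \<alpha> (s3 m t) = (\<lambda>_. 0)
    \<longleftrightarrow> (\<forall>g\<in>carrier (Tgrp m t). \<alpha> g + (\<Sum>h\<in>carrier (Tgrp m t). \<alpha> h) - (\<Sum>i<m. \<alpha> (i, snd g)) = 0)"
  "ga_mult m t (s3 m t) \<alpha> = (\<lambda>_. 0)
    \<longleftrightarrow> (\<forall>g\<in>carrier (Tgrp m t). \<alpha> g + (\<Sum>h\<in>carrier (Tgrp m t). \<alpha> h) - (\<Sum>i<m. \<alpha> (i, snd g)) = 0)"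
proof -
  have zero_iff: "f = (\<lambda>_. 0) \<longleftrightarrow> (\<forall>g\<in>carrier (Tgrp m t). f g = 0)"
    if "\<And>g. g \<notin> carrier (Tgrp m t) \<Longrightarrow> f g = 0" for f :: "nat \<times> nat \<Rightarrow> 'a"
    using that by (auto simp: fun_eq_iff)
  show "ga_mult m t \<alpha> (s3 m t) = (\<lambda>_. 0)
    \<longleftrightarrow> (\<forall>g\<in>carrier (Tgrp m t). \<alpha> g + (\<Sum>h\<in>carrier (Tgrp m t). \<alpha> h) - (\<Sum>i<m. \<alpha> (i, snd g)) = 0)"
    using zero_iff [of "ga_mult m t \<alpha> (s3 m t)"] by (simp add: ga_mult_s3 ga_mult_outside_carrier [OF m_pos])
  show "ga_mult m t (s3 m t) \<alpha> = (\<lambda>_. 0)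
    \<longleftrightarrow> (\<forall>g\<in>carrier (Tgrp m t). \<alpha> g + (\<Sum>h\<in>carrier (Tgrp m t). \<alpha> h) - (\<Sum>i<m. \<alpha> (i, snd g)) = 0)"
    using zero_iff [of "ga_mult m t (s3 m t) \<alpha>"] by (simp add: ga_mult_s3 ga_mult_outside_carrier [OF m_pos])
qed

lemma inv_ygen: "inv\<^bsub>Tgrp m t\<^esub> ygen = (0, 2)"
  using m_pos by (intro G.inv_equality) (auto simp: ygen_def mult_Tgrp one_Tgrp carrier_Tgrp)

lemma xhat_mult_basis:
  assumes h: "h \<in> carrier (Tgrp m t)"
  shows "ga_mult m t (xhat m t) (ga_basis h)
    = (\<lambda>g. if g \<in> carrier (Tgrp m t) \<and> snd g = snd h then 1 else 0)"
proof
  fix g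
  show "ga_mult m t (xhat m t) (ga_basis h) g = (if g \<in> carrier (Tgrp m t) \<and> snd g = snd h then 1 else 0)"
  proof (cases "g \<in> carrier (Tgrp m t)")
    case True
    then show ?thesis
      using h by (auto simp: ga_mult_basis_right G.is_group xhat_eq [OF m_pos] snd_mult_inv_eq_0_iff)
  next
    case False
    then show ?thesis
      by (simp add: ga_mult_outside_carrier [OF m_pos])
  qed
qed

lemma xhat_combination_eq_xhat_comb:
  "ga_add (ga_add
      (ga_smult am (ga_mult m t (xhat m t) (ga_basis (inv\<^bsub>Tgrp m t\<^esub> ygen))))
      (ga_smult a (xhat m t)))
      (ga_smult ap (ga_mult m t (xhat m t) (ga_basis ygen)))
    = xhat_comb m a ap am"
proof -
  have "(0, 1) \<in> carrier (Tgrp m t)" and "(0, 2) \<in> carrier (Tgrp m t)"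
    using m_pos by (simp_all add: carrier_Tgrp)
  then show ?thesis
    unfolding inv_ygen
    unfolding ygen_def xhat_mult_basis [OF \<open>(0, 1) \<in> _\<close>] xhat_mult_basis [OF \<open>(0, 2) \<in> _\<close>]
    unfolding xhat_eq [OF m_pos]
    by (auto simp: ga_add_def ga_smult_def xhat_comb_def carrier_Tgrp)
qed

end

theorem proposition3p2:
  fixes k m :: nat and t :: int
  assumes "finite (UNIV :: 'a::field set)" and "CHAR('a) = 3"
    and "m = 3 * k + 1"
    and "[t ^ 3 = 1] (mod int m)"
    and "gcd (int m) (t - 1) = 1"
  shows "{\<alpha> :: nat \<times> nat \<Rightarrow> 'a. in_FG m t \<alpha> \<and>
            ga_mult m t \<alpha> (s3 m t) = (\<lambda>_. 0) \<and> ga_mult m t (s3 m t) \<alpha> = (\<lambda>_. 0)}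
       = {ga_add (ga_add
            (ga_smult am (ga_mult m t (xhat m t) (ga_basis (inv\<^bsub>Tgrp m t\<^esub> ygen))))
            (ga_smult a (xhat m t)))
            (ga_smult ap (ga_mult m t (xhat m t) (ga_basis ygen)))
          | am a ap. am + a + ap = 0}"
proof -
  have "of_nat 3 = (0::'a)"
    using assms(2) of_nat_CHAR [where 'a = 'a] by simp
  then have m: "of_nat m = (1::'a)"
    using assms(3) by simp
  have "m mod 3 = 1"
    using assms(3) by simp
  then interpret T3m m t
    using assms(3-5) by unfold_locales (simp_all add: coprime_iff_gcd_eq_1 dvd_eq_mod_eq_0)
  have "{\<alpha> :: nat \<times> nat \<Rightarrow> 'a. in_FG m t \<alpha> \<and>
            ga_mult m t \<alpha> (s3 m t) = (\<lambda>_. 0) \<and> ga_mult m t (s3 m t) \<alpha> = (\<lambda>_. 0)}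
      = {\<alpha>. in_FG m t \<alpha> \<and> (\<exists>a0 a1 a2. a0 + a1 + a2 = 0 \<and> \<alpha> = xhat_comb m a0 a1 a2)}"
    unfolding ga_mult_s3_eq_0_iff conj_absorb using annihilator_condition_iff_xhat_comb [OF m] by blast
  also have "\<dots> = {xhat_comb m a ap am | am a ap. am + a + ap = 0}"
    by (rule in_FG_zero_sum_xhat_comb_eq)
  finally show ?thesis
    by (simp only: xhat_combination_eq_xhat_comb)
qed

end
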